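(* Let $X,Y$ be Hilbert spaces, $F:\mathrm{dom}(F)\subset X\to Y$, $y\in\mathrm{Ran}(F)$, $x^*\in\mathrm{dom}(F)$, and let $x^\dagger$ be an $x^*$-minimum-norm solution of $F(x)=y$. Suppose Assumption 1 holds. Let $A:=F'(x^\dagger)$, and suppose there is a sequence of positive numbers $\lambda_k\in\sigma(AA^* )$ with $\lambda_k\to0$. Suppose there is a constant $\tau>0$ such that for every sufficiently small $\delta>0$ and every $y^\delta\in Y$ with $\|y^\delta-y\|\le\delta$ a number $\alpha(\delta,y^\delta)>0$ and a Tikhonov minimizer $x^\delta_{\alpha(\delta,y^\delta)}$ are chosen with $\|F(x^\delta_{\alpha(\delta,y^\delta)})-y^\delta\|\le\tau\delta$. If $$\sup\left\{\|x^\delta_{\alpha(\delta,y^\delta)}-x^\dagger\|:\ \|y^\delta-y\|\le\delta\right\}=o(\delta^{1/2})\quad\text{as }\delta\to0,$$ then $x^\dagger=x^*$.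
   Context: An $x^*$-minimum-norm solution is a point $x^\dagger\in\mathrm{dom}(F)$ with $F(x^\dagger)=y$ and $\|x^\dagger-x^*\|=\min\{\|x-x^*\|: x\in\mathrm{dom}(F),\ F(x)=y\}$. For $\alpha>0$ and $y^\delta\in Y$, a Tikhonov minimizer $x_\alpha^\delta$ is any minimizer over $\mathrm{dom}(F)$ of $\|F(x)-y^\delta\|^2+\alpha\|x-x^*\|^2$ (assumed to exist). $B_\rho(x^\dagger)=\{x\in X:\|x-x^\dagger\|<\rho\}$. $\sigma(AA^* )$ denotes the spectrum of $AA^*$. Assumption 1: there is $\rho>0$ with $B_\rho(x^\dagger)\subset\mathrm{dom}(F)$, $F$ is Fréchet differentiable on $B_\rho(x^\dagger)$, and there is $\kappa_0\ge0$ such that for all $x,z\in B_\rho(x^\dagger)$ there is a bounded linear operator $R(x,z):X\to X$ with $F'(x)=F'(z)R(x,z)$ and $\|I-R(x,z)\|\le\kappa_0\|x-z\|$. *)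

theory Defs
  imports "HOL-Analysis.Analysis"
begin

definition min_norm_solution ::
  "'a::real_normed_vector set \<Rightarrow> ('a \<Rightarrow> 'b) \<Rightarrow> 'b \<Rightarrow> 'a \<Rightarrow> 'a \<Rightarrow> bool" where
  "min_norm_solution D F y xs xd \<longleftrightarrow>
     xd \<in> D \<and> F xd = y \<and> (\<forall>x\<in>D. F x = y \<longrightarrow> norm (xd - xs) \<le> norm (x - xs))"

definition tikhonov_minimizer ::
  "'a::real_normed_vector set \<Rightarrow> ('a \<Rightarrow> 'b::real_normed_vector) \<Rightarrow> 'a \<Rightarrow> real \<Rightarrow> 'b \<Rightarrow> 'a \<Rightarrow> bool" where
  "tikhonov_minimizer D F xs \<alpha> yd x \<longleftrightarrow>
     x \<in> D \<and> (\<forall>z\<in>D. (norm (F x - yd))\<^sup>2 + \<alpha> * (norm (x - xs))\<^sup>2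
                       \<le> (norm (F z - yd))\<^sup>2 + \<alpha> * (norm (z - xs))\<^sup>2)"

definition assumption1 ::
  "'a::real_normed_vector set \<Rightarrow> ('a \<Rightarrow> 'b::real_normed_vector) \<Rightarrow> ('a \<Rightarrow> ('a \<Rightarrow>\<^sub>L 'b)) \<Rightarrow> 'a \<Rightarrow> bool" where
  "assumption1 D F F' xd \<longleftrightarrow>
     (\<exists>\<rho>>0. ball xd \<rho> \<subseteq> D \<and>
        (\<forall>x\<in>ball xd \<rho>. (F has_derivative blinfun_apply (F' x)) (at x)) \<and>
        (\<exists>\<kappa>0\<ge>0. \<forall>x\<in>ball xd \<rho>. \<forall>z\<in>ball xd \<rho>.
            \<exists>R::'a \<Rightarrow>\<^sub>L 'a. F' x = F' z o\<^sub>L R \<and> norm (id_blinfun - R) \<le> \<kappa>0 * norm (x - z)))"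

definition op_spectrum :: "('b::real_normed_vector \<Rightarrow> 'b) \<Rightarrow> real set" where
  "op_spectrum T = {l. \<not> (\<exists>S. bounded_linear S \<and> (\<forall>y. S (T y - l *\<^sub>R y) = y)
                                  \<and> (\<forall>y. T (S y) - l *\<^sub>R S y = y))}"

end

theory Submission
  imports Defs
begin

(*
  Suppose xd ~= xs, write A = F'(xd), and let lam > 0 be a small point of the spectrum of A A^*.
  Take a unit vector v with |A A^* v - lam v| arbitrarily small, so that |A^* v| <= 2 sqrt lam,
  and the data yd = y +- lam v at noise level lam, the sign chosen against <A^* v, xd - xs>.
  By Assumption 1, F'(x) = A R with |I - R| <= kappa |x - xd|, so the first-order condition
  <A R h, F x - yd> + alpha <h, x - xs> = 0 of the Tikhonov minimizer x holds for all h.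
  Testing it with h = xd - xs gives alpha = O(lam); testing it with h = A^* v isolates the term
  lam^2 and, if |x - xd| <= eps sqrt lam, bounds all other terms by eps M lam^2 plus a multiple
  of |A A^* v - lam v|, with M independent of eps and lam.  Hence eps >= 1/M, which contradicts
  the rate o(sqrt delta) along lam_k -> 0.
*)

section \<open>Projections and adjoints in Hilbert spaces\<close>

lemma convex_minimizing_sequence_Cauchy:
  fixes S :: "'a::real_inner set"
  assumes "convex S" and s_in: "\<And>n. s n \<in> S"
    and d_le: "\<And>z. z \<in> S \<Longrightarrow> d \<le> (norm (y - z))\<^sup>2"
    and s_min: "\<And>n. (norm (y - s n))\<^sup>2 < d + 1 / real (Suc n)"
  shows "Cauchy s"
proof (rule CauchyI)
  define f where "f z = (norm (y - z))\<^sup>2" for z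
  have parallelogram: "(norm (a - b))\<^sup>2 \<le> 2 * (f a - d) + 2 * (f b - d)" if "a \<in> S" "b \<in> S" for a b
  proof -
    have "(1/2) *\<^sub>R a + (1/2) *\<^sub>R b \<in> S"
      using \<open>convex S\<close> that by (intro convexD) auto
    moreover have "(norm (a - b))\<^sup>2 = 2 * f a + 2 * f b - 4 * f ((1/2) *\<^sub>R a + (1/2) *\<^sub>R b)"
      unfolding f_def power2_norm_eq_inner by (simp add: algebra_simps inner_commute)
    ultimately show ?thesis
      using d_le by (fastforce simp: f_def)
  qed
  fix e :: real assume "e > 0"
  then obtain N where N: "1 / real (Suc N) < e\<^sup>2 / 4"
    by (metis nat_approx_posE zero_less_divide_iff zero_less_numeral zero_less_power)
  have close: "f (s n) - d < e\<^sup>2 / 4" if "n \<ge> N" for n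
  proof -
    have "1 / real (Suc n) \<le> 1 / real (Suc N)"
      using that by (intro divide_left_mono) auto
    then show ?thesis
      using s_min[of n] N by (simp add: f_def)
  qed
  have "(norm (s m - s n))\<^sup>2 < e\<^sup>2" if "m \<ge> N" "n \<ge> N" for m n
    using parallelogram[OF s_in s_in, of m n] close[OF that(1)] close[OF that(2)] by argo
  then show "\<exists>M. \<forall>m\<ge>M. \<forall>n\<ge>M. norm (s m - s n) < e"
    using \<open>e > 0\<close> by (meson power_less_imp_less_base less_imp_le)
qed

lemma nearest_point_exists:
  fixes S :: "'a::{real_inner,complete_space} set"
  assumes "convex S" and "closed S" and "S \<noteq> {}"
  shows "\<exists>p\<in>S. \<forall>z\<in>S. norm (y - p) \<le> norm (y - z)"
proof -
  define f where "f z = (norm (y - z))\<^sup>2" for z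
  define d where "d = Inf (f ` S)"
  have d_le: "d \<le> f z" if "z \<in> S" for z
    unfolding d_def using that by (intro cInf_lower bdd_belowI[of _ 0]) (auto simp: f_def)
  have "\<exists>z\<in>S. f z < d + 1 / real (Suc n)" for n
    using cInf_lessD[of "f ` S" "d + 1 / real (Suc n)"] \<open>S \<noteq> {}\<close> by (auto simp: d_def)
  then obtain s where s_in: "\<And>n. s n \<in> S" and s_min: "\<And>n. f (s n) < d + 1 / real (Suc n)"
    by metis
  have "Cauchy s"
    using s_min d_le
    by (intro convex_minimizing_sequence_Cauchy[OF \<open>convex S\<close> s_in]) (auto simp: f_def)
  then obtain p where lim: "s \<longlonglongrightarrow> p"
    using Cauchy_convergent_iff convergent_def by blast
  have "p \<in> S"
    using \<open>closed S\<close> s_in lim closed_sequentially by blast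
  have "f p \<le> d"
  proof (rule LIMSEQ_le)
    show "(\<lambda>n. f (s n)) \<longlonglongrightarrow> f p"
      unfolding f_def by (intro tendsto_intros lim)
    show "(\<lambda>n. d + 1 / real (Suc n)) \<longlonglongrightarrow> d"
      using tendsto_add[OF tendsto_const LIMSEQ_Suc[OF lim_const_over_n[of 1]]] by simp
  qed (use s_min less_imp_le in blast)
  then have "\<forall>z\<in>S. f p \<le> f z"
    using d_le by fastforce
  then show ?thesis
    using \<open>p \<in> S\<close> by (auto simp: f_def)
qed

lemma nearest_point_subspace_orthogonal:
  fixes M :: "'a::real_inner set"
  assumes "subspace M" and "p \<in> M" and nearest: "\<forall>z\<in>M. norm (y - p) \<le> norm (y - z)"
    and "m \<in> M"
  shows "(y - p) \<bullet> m = 0"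
proof (cases "m = 0")
  case False
  define c where "c = (y - p) \<bullet> m"
  define t where "t = c / (m \<bullet> m)"
  have "m \<bullet> m > 0"
    using False by simp
  have "p + t *\<^sub>R m \<in> M"
    using assms by (simp add: subspace_add subspace_scale)
  then have "(norm (y - p))\<^sup>2 \<le> (norm (y - (p + t *\<^sub>R m)))\<^sup>2"
    using nearest by (simp add: power_mono)
  also have "\<dots> = (norm (y - p))\<^sup>2 - 2 * t * c + t\<^sup>2 * (m \<bullet> m)"
    unfolding power2_norm_eq_inner c_def by (simp add: algebra_simps inner_commute power2_eq_square)
  also have "\<dots> = (norm (y - p))\<^sup>2 - c\<^sup>2 / (m \<bullet> m)"
    using \<open>m \<bullet> m > 0\<close> unfolding t_def by (simp add: field_simps power2_eq_square)
  finally have "c\<^sup>2 / (m \<bullet> m) \<le> 0" by simp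
  then show ?thesis
    using \<open>m \<bullet> m > 0\<close> by (simp add: divide_le_0_iff c_def)
qed simp

lemma orthogonal_projection_exists:
  fixes M :: "'a::{real_inner,complete_space} set"
  assumes "subspace M" and "closed M"
  shows "\<exists>p\<in>M. \<forall>m\<in>M. (y - p) \<bullet> m = 0"
proof -
  obtain p where "p \<in> M" "\<forall>z\<in>M. norm (y - p) \<le> norm (y - z)"
    using nearest_point_exists[of M y] assms subspace_imp_convex subspace_0 by blast
  then show ?thesis
    using nearest_point_subspace_orthogonal assms(1) by blast
qed

lemma riesz_representation:
  fixes \<phi> :: "'a::{real_inner,complete_space} \<Rightarrow> real"
  assumes "bounded_linear \<phi>"
  shows "\<exists>w. \<forall>x. \<phi> x = x \<bullet> w"
proof (cases "\<forall>x. \<phi> x = 0")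
  case False
  interpret bounded_linear \<phi> by fact
  obtain z where "\<phi> z \<noteq> 0" using False by blast
  define K where "K = \<phi> -` {0}"
  have "subspace K"
    unfolding K_def subspace_def by (auto simp: add scale zero)
  moreover have "closed K"
    unfolding K_def by (intro closed_vimage continuous_on_id) (auto intro: continuous_on)
  ultimately obtain p where "p \<in> K" and orth: "\<forall>m\<in>K. (z - p) \<bullet> m = 0"
    using orthogonal_projection_exists by blast
  define q where "q = z - p"
  have "\<phi> q = \<phi> z"
    using \<open>p \<in> K\<close> by (simp add: q_def K_def diff)
  have "\<phi> x = x \<bullet> ((\<phi> q / (q \<bullet> q)) *\<^sub>R q)" for x
  proof -
    have "x - (\<phi> x / \<phi> q) *\<^sub>R q \<in> K"
      using \<open>\<phi> q = \<phi> z\<close> \<open>\<phi> z \<noteq> 0\<close> by (simp add: K_def diff scale)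
    then have "q \<bullet> (x - (\<phi> x / \<phi> q) *\<^sub>R q) = 0"
      using orth unfolding q_def by blast
    then have "q \<bullet> x = (\<phi> x / \<phi> q) * (q \<bullet> q)"
      by (simp add: inner_diff_right)
    moreover have "q \<noteq> 0"
      using \<open>\<phi> q = \<phi> z\<close> \<open>\<phi> z \<noteq> 0\<close> zero by auto
    ultimately show ?thesis
      using \<open>\<phi> q = \<phi> z\<close> \<open>\<phi> z \<noteq> 0\<close> by (simp add: inner_commute[of x q])
  qed
  then show ?thesis by blast
next
  case True
  then show ?thesis by (intro exI[of _ 0]) simp
qed

lemma adjoint_works_complete:
  fixes f :: "'a::{real_inner,complete_space} \<Rightarrow> 'b::real_inner"
  assumes "bounded_linear f"
  shows "f x \<bullet> y = x \<bullet> adjoint f y"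
proof -
  have "\<exists>w. \<forall>x. f x \<bullet> y = x \<bullet> w" for y
    using assms by (intro riesz_representation bounded_linear_inner_left_comp)
  then obtain g where "\<forall>x y. f x \<bullet> y = x \<bullet> g y"
    by metis
  then have "\<forall>x y. f x \<bullet> y = x \<bullet> adjoint f y"
    unfolding adjoint_def by (rule someI[where P = "\<lambda>f'. \<forall>x y. f x \<bullet> y = x \<bullet> f' y"])
  then show ?thesis by blast
qed

lemma bounded_linear_adjoint:
  fixes f :: "'a::{real_inner,complete_space} \<Rightarrow> 'b::real_inner"
  assumes "bounded_linear f"
  shows "bounded_linear (adjoint f)"
proof -
  let ?g = "adjoint f"
  have adj: "x \<bullet> ?g y = f x \<bullet> y" for x y
    using adjoint_works_complete[OF assms] by simp
  obtain K where "K > 0" and K: "\<And>x. norm (f x) \<le> norm x * K"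
    using bounded_linear.pos_bounded[OF assms] by blast
  have "?g (y1 + y2) = ?g y1 + ?g y2" for y1 y2
    by (rule vector_eq_ldot[THEN iffD1]) (simp add: adj inner_add_right)
  moreover have "?g (r *\<^sub>R y) = r *\<^sub>R ?g y" for r y
    by (rule vector_eq_ldot[THEN iffD1]) (simp add: adj)
  moreover have "norm (?g y) \<le> norm y * K" for y
  proof -
    have "norm (?g y) * norm (?g y) = f (?g y) \<bullet> y"
      by (simp flip: adj add: norm_eq_sqrt_inner)
    also have "\<dots> \<le> norm (f (?g y)) * norm y"
      by (rule norm_cauchy_schwarz)
    also have "\<dots> \<le> norm (?g y) * (norm y * K)"
      using mult_right_mono[OF K[of "?g y"] norm_ge_zero[of y]] by (simp add: mult_ac)
    finally show ?thesis
      using \<open>K > 0\<close> by (cases "?g y = 0") auto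
  qed
  ultimately show ?thesis
    by (intro bounded_linear_intro) auto
qed

lemma compose_adjoint_selfadjoint:
  fixes f :: "'a::{real_inner,complete_space} \<Rightarrow> 'b::real_inner"
  assumes "bounded_linear f"
  shows "bounded_linear (f \<circ> adjoint f)" and "(f \<circ> adjoint f) u \<bullet> z = u \<bullet> (f \<circ> adjoint f) z"
proof -
  show "bounded_linear (f \<circ> adjoint f)"
    unfolding o_def by (rule bounded_linear_compose[OF assms bounded_linear_adjoint[OF assms]])
  have "(f \<circ> adjoint f) u \<bullet> z = adjoint f u \<bullet> adjoint f z"
    by (simp add: adjoint_works_complete[OF assms])
  also have "\<dots> = adjoint f z \<bullet> adjoint f u"
    by (rule inner_commute)
  also have "\<dots> = f (adjoint f z) \<bullet> u"
    by (simp add: adjoint_works_complete[OF assms])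
  finally show "(f \<circ> adjoint f) u \<bullet> z = u \<bullet> (f \<circ> adjoint f) z"
    by (metis comp_apply inner_commute)
qed

section \<open>Approximate eigenvectors of self-adjoint operators\<close>

lemma surj_if_symmetric_bounded_below:
  fixes L :: "'a::{real_inner,complete_space} \<Rightarrow> 'a"
  assumes "bounded_linear L" and sym: "\<And>u v. L u \<bullet> v = u \<bullet> L v"
    and "c > 0" and below: "\<And>v. c * norm v \<le> norm (L v)"
  shows "surj L"
proof -
  interpret L: bounded_linear L by fact
  have "complete (range L)"
    using complete_isometric_image[OF \<open>c > 0\<close> subspace_UNIV \<open>bounded_linear L\<close>] below
    by (simp add: complete_UNIV)
  then have "closed (range L)"
    by (simp add: complete_eq_closed)
  moreover have "subspace (range L)"
    by (rule linear_subspace_image[OF L.linear subspace_UNIV])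
  ultimately have "y \<in> range L" for y
  proof -
    obtain p where "p \<in> range L" and orth: "\<forall>m\<in>range L. (y - p) \<bullet> m = 0"
      using orthogonal_projection_exists \<open>closed (range L)\<close> \<open>subspace (range L)\<close> by blast
    have "L (y - p) \<bullet> L (y - p) = 0"
      using orth sym by (metis rangeI)
    then have "c * norm (y - p) \<le> 0"
      using below[of "y - p"] by simp
    then show ?thesis
      using \<open>p \<in> range L\<close> \<open>c > 0\<close> by (simp add: mult_le_0_iff)
  qed
  then show ?thesis by blast
qed

lemma not_in_op_spectrum_if_bounded_below:
  fixes T :: "'a::{real_inner,complete_space} \<Rightarrow> 'a"
  assumes "bounded_linear T" and sym: "\<And>u v. T u \<bullet> v = u \<bullet> T v"
    and "c > 0" and below: "\<And>v. c * norm v \<le> norm (T v - \<mu> *\<^sub>R v)"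
  shows "\<mu> \<notin> op_spectrum T"
proof -
  define L where "L v = T v - \<mu> *\<^sub>R v" for v
  have "bounded_linear L"
    unfolding L_def
    by (intro bounded_linear_sub \<open>bounded_linear T\<close> bounded_linear_scaleR_right bounded_linear_ident)
  then interpret L: bounded_linear L .
  have "surj L"
    by (rule surj_if_symmetric_bounded_below[OF \<open>bounded_linear L\<close> _ \<open>c > 0\<close>])
      (auto simp: L_def below inner_diff_left inner_diff_right sym)
  have L_inj: "u = v" if "L u = L v" for u v
  proof -
    have "L (u - v) = 0"
      using that by (simp add: L.diff)
    then have "c * norm (u - v) \<le> 0"
      using below[of "u - v"] by (simp add: L_def)
    then show ?thesis
      using \<open>c > 0\<close> by (simp add: mult_le_0_iff)
  qed
  define S where "S = inv L"
  have LS: "L (S y) = y" for y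
    unfolding S_def by (meson \<open>surj L\<close> surj_f_inv_f)
  have SL: "S (L v) = v" for v
    using LS L_inj by blast
  have "bounded_linear S"
  proof (rule bounded_linear_intro[of _ "1 / c"])
    show "S (x + y) = S x + S y" for x y
      by (rule L_inj) (simp add: LS L.add)
    show "S (r *\<^sub>R x) = r *\<^sub>R S x" for r x
      by (rule L_inj) (simp add: LS L.scaleR)
    show "norm (S x) \<le> norm x * (1 / c)" for x
      using below[of "S x"] LS[of x] \<open>c > 0\<close> by (simp add: L_def field_simps)
  qed
  with LS SL show ?thesis
    unfolding op_spectrum_def L_def by blast
qed

lemma op_spectrum_approximate_eigenvector:
  fixes T :: "'a::{real_inner,complete_space} \<Rightarrow> 'a"
  assumes "bounded_linear T" and "\<And>u v. T u \<bullet> v = u \<bullet> T v"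
    and "\<mu> \<in> op_spectrum T" and "c > 0"
  obtains v where "norm v = 1" and "norm (T v - \<mu> *\<^sub>R v) < c"
proof (rule ccontr)
  assume no_eigenvector: "\<not> thesis"
  interpret T: bounded_linear T by fact
  have "c * norm v \<le> norm (T v - \<mu> *\<^sub>R v)" for v
  proof (cases "v = 0")
    case False
    define u where "u = (1 / norm v) *\<^sub>R v"
    have "T u - \<mu> *\<^sub>R u = (1 / norm v) *\<^sub>R (T v - \<mu> *\<^sub>R v)"
      unfolding u_def by (simp add: T.scaleR scaleR_diff_right)
    then have eq: "norm (T u - \<mu> *\<^sub>R u) = norm (T v - \<mu> *\<^sub>R v) / norm v"
      by simp
    have "norm u = 1"
      using False by (simp add: u_def)
    then have "c \<le> norm (T u - \<mu> *\<^sub>R u)"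
      using no_eigenvector that by (meson not_less)
    then have "c * norm v \<le> norm (T u - \<mu> *\<^sub>R u) * norm v"
      by (simp add: mult_right_mono)
    also have "\<dots> = norm (T v - \<mu> *\<^sub>R v)"
      using eq False by simp
    finally show ?thesis .
  qed (simp add: T.zero)
  then show False
    using not_in_op_spectrum_if_bounded_below assms by blast
qed

lemma norm_adjoint_approximate_eigenvector:
  fixes A :: "'a::{real_inner,complete_space} \<Rightarrow>\<^sub>L 'b::real_inner"
  assumes "norm v = 1"
  shows "(norm (adjoint A v))\<^sup>2 \<le> \<bar>\<mu>\<bar> + norm (A (adjoint A v) - \<mu> *\<^sub>R v)"
proof -
  have "(norm (adjoint A v))\<^sup>2 = A (adjoint A v) \<bullet> v"
    by (simp add: adjoint_works_complete[OF blinfun.bounded_linear_right]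
        dot_square_norm[symmetric])
  also have "\<dots> \<le> norm (A (adjoint A v))"
    using Cauchy_Schwarz_ineq2[of "A (adjoint A v)" v] assms by simp
  also have "\<dots> \<le> norm (A (adjoint A v) - \<mu> *\<^sub>R v) + norm (\<mu> *\<^sub>R v)"
    using norm_triangle_sub[of "A (adjoint A v)" "\<mu> *\<^sub>R v"] by simp
  finally show ?thesis
    using assms by simp
qed

section \<open>The first-order condition of Tikhonov minimizers\<close>

lemma tikhonov_minimizer_stationary:
  fixes F :: "'a::real_inner \<Rightarrow> 'b::real_inner"
  assumes "tikhonov_minimizer D F xs \<alpha> yd x" and "r > 0" and "ball x r \<subseteq> D"
    and "(F has_derivative DF) (at x)"
  shows "DF h \<bullet> (F x - yd) + \<alpha> * (h \<bullet> (x - xs)) = 0"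
proof -
  define g where "g z = (F z - yd) \<bullet> (F z - yd) + \<alpha> * ((z - xs) \<bullet> (z - xs))" for z
  define g' where
    "g' h = DF h \<bullet> (F x - yd) + (F x - yd) \<bullet> DF h + \<alpha> * (h \<bullet> (x - xs) + (x - xs) \<bullet> h)" for h
  have "(g has_derivative g') (at x)"
    unfolding g_def g'_def by (auto intro!: derivative_eq_intros assms(4))
  moreover have "\<forall>\<^sub>F z in at x. g x \<le> g z"
    unfolding eventually_at
  proof (intro exI[of _ r] conjI ballI impI)
    fix z assume "z \<noteq> x \<and> dist z x < r"
    then have "z \<in> D"
      using assms(3) by (auto simp: dist_commute)
    then show "g x \<le> g z"
      using assms(1) by (simp add: tikhonov_minimizer_def g_def power2_norm_eq_inner)
  qed (rule \<open>r > 0\<close>)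
  ultimately have "g' = (\<lambda>h. 0)"
    by (rule has_derivative_local_min)
  then have "g' h = 0" by simp
  then show ?thesis
    by (simp add: g'_def inner_commute)
qed

lemma tested_stationarity_parameter_le:
  fixes A :: "'a::real_inner \<Rightarrow>\<^sub>L 'b::real_inner"
  assumes stationary: "A (R e) \<bullet> r + \<alpha> * (e \<bullet> (d + e)) = 0"
    and "\<alpha> > 0" and "e \<noteq> 0" and "norm (R e) \<le> 2 * norm e" and "2 * norm d \<le> norm e"
  shows "\<alpha> * norm e \<le> 4 * norm A * norm r"
proof -
  have "norm e * norm e / 2 \<le> e \<bullet> (d + e)"
  proof -
    have "\<bar>e \<bullet> d\<bar> \<le> norm e * norm d"
      by (rule Cauchy_Schwarz_ineq2)
    moreover have "norm e * norm d \<le> norm e * (norm e / 2)"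
      using assms(5) by (intro mult_left_mono) auto
    ultimately show ?thesis
      by (simp add: inner_add_right dot_square_norm power2_eq_square)
  qed
  then have "\<alpha> * (norm e * norm e / 2) \<le> \<alpha> * (e \<bullet> (d + e))"
    using \<open>\<alpha> > 0\<close> by (simp add: mult_left_mono)
  also have "\<dots> = - (A (R e) \<bullet> r)"
    using stationary by linarith
  also have "\<dots> \<le> norm (A (R e)) * norm r"
    using Cauchy_Schwarz_ineq2[of "A (R e)" r] by linarith
  also have "\<dots> \<le> norm A * (2 * norm e) * norm r"
    using assms(4) by (intro mult_right_mono order_trans[OF norm_blinfun mult_left_mono]) auto
  finally show ?thesis
    using \<open>e \<noteq> 0\<close> by (simp add: field_simps)
qed

lemma adjoint_tested_stationarity:
  fixes A :: "'a::{real_inner,complete_space} \<Rightarrow>\<^sub>L 'b::real_inner" and v :: 'b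
  defines "w \<equiv> adjoint A v"
  assumes stationary: "A (R w) \<bullet> r + \<alpha> * (w \<bullet> (d + e)) = 0"
    and residual: "r = A d + q - (s * \<mu>) *\<^sub>R v" and "norm v = 1"
  shows "s * \<mu>\<^sup>2 = (\<mu> + \<alpha>) * (w \<bullet> d) + \<mu> * (v \<bullet> q) + (A w - \<mu> *\<^sub>R v) \<bullet> r + A (R w - w) \<bullet> r
    + \<alpha> * (w \<bullet> e)"
proof -
  have "v \<bullet> r = w \<bullet> d + v \<bullet> q - s * \<mu>"
    using \<open>norm v = 1\<close>
    by (simp add: residual w_def adjoint_works_complete[OF blinfun.bounded_linear_right]
        inner_diff_right inner_add_right inner_commute[of v] inner_commute[of d] dot_square_norm)
  then have "\<mu> * (v \<bullet> r) = \<mu> * (w \<bullet> d) + \<mu> * (v \<bullet> q) - s * \<mu>\<^sup>2"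
    by (simp add: power2_eq_square right_diff_distrib flip: distrib_left)
  moreover have "A (R w) \<bullet> r = \<mu> * (v \<bullet> r) + (A w - \<mu> *\<^sub>R v) \<bullet> r + A (R w - w) \<bullet> r"
    by (simp add: blinfun.diff_right inner_diff_left)
  ultimately show ?thesis
    using stationary by (simp add: inner_add_right algebra_simps)
qed

lemma adjoint_tested_stationarity_bound:
  fixes A :: "'a::{real_inner,complete_space} \<Rightarrow>\<^sub>L 'b::real_inner" and v :: 'b
  defines "w \<equiv> adjoint A v"
  assumes stationary: "A (R w) \<bullet> r + \<alpha> * (w \<bullet> (d + e)) = 0"
    and residual: "r = A d + q - (s * \<mu>) *\<^sub>R v"
    and "norm v = 1" and "\<bar>s\<bar> = 1" and "s * (w \<bullet> e) \<le> 0" and "\<mu> \<ge> 0" and "\<alpha> \<ge> 0"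
    and R: "norm (R w - w) \<le> k * norm w"
  shows "\<mu>\<^sup>2 \<le> (\<mu> + \<alpha>) * norm w * norm d + \<mu> * norm q + norm (A w - \<mu> *\<^sub>R v) * norm r
           + norm A * k * norm w * norm r"
proof -
  define X where "X = (\<mu> + \<alpha>) * (w \<bullet> d) + \<mu> * (v \<bullet> q) + (A w - \<mu> *\<^sub>R v) \<bullet> r + A (R w - w) \<bullet> r"
  have "\<mu>\<^sup>2 = s * X + s * (\<alpha> * (w \<bullet> e))"
    using adjoint_tested_stationarity[where R = R, OF stationary[unfolded w_def] residual \<open>norm v = 1\<close>]
      \<open>\<bar>s\<bar> = 1\<close>
    by (auto simp: X_def w_def algebra_simps abs_if split: if_splits)
  moreover have "s * X \<le> \<bar>X\<bar>"
    using \<open>\<bar>s\<bar> = 1\<close> by (auto simp: abs_if split: if_splits)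
  moreover have "s * (\<alpha> * (w \<bullet> e)) \<le> 0"
    using \<open>s * (w \<bullet> e) \<le> 0\<close> \<open>\<alpha> \<ge> 0\<close> by (simp add: mult.left_commute[of s] mult_nonneg_nonpos)
  moreover have "\<bar>A (R w - w) \<bullet> r\<bar> \<le> norm A * k * norm w * norm r"
  proof -
    have "norm (A (R w - w)) \<le> norm A * (k * norm w)"
      using R by (intro order_trans[OF norm_blinfun mult_left_mono]) auto
    then show ?thesis
      using Cauchy_Schwarz_ineq2[of "A (R w - w)" r] mult_right_mono[of _ _ "norm r"]
      by (smt (verit) mult.assoc norm_ge_zero)
  qed
  moreover have "\<bar>(\<mu> + \<alpha>) * (w \<bullet> d)\<bar> \<le> (\<mu> + \<alpha>) * (norm w * norm d)"
    and "\<bar>\<mu> * (v \<bullet> q)\<bar> \<le> \<mu> * (norm v * norm q)"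
    using \<open>\<mu> \<ge> 0\<close> \<open>\<alpha> \<ge> 0\<close> by (simp_all add: abs_mult Cauchy_Schwarz_ineq2 mult_left_mono)
  moreover have "\<bar>(A w - \<mu> *\<^sub>R v) \<bullet> r\<bar> \<le> norm (A w - \<mu> *\<^sub>R v) * norm r"
    by (rule Cauchy_Schwarz_ineq2)
  ultimately show ?thesis
    using \<open>norm v = 1\<close> unfolding X_def by (simp add: algebra_simps)
qed

lemma rate_estimate_of_tested_bound:
  fixes \<mu> :: real
  assumes key: "\<mu>\<^sup>2 \<le> (\<mu> + \<alpha>) * W * d + \<mu> * (a * \<kappa> * d\<^sup>2) + \<eta> * r + a * (\<kappa> * d) * W * r"
    and "W \<le> 2 * q" and "d \<le> \<epsilon> * q" and "q * q = \<mu>" and "\<alpha> \<le> C * \<mu>" and "r \<le> \<tau> * \<mu>"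
    and "q > 0" and "0 \<le> W" and "0 \<le> d" and "0 \<le> r" and "0 \<le> \<alpha>" and "0 \<le> a" and "0 \<le> \<kappa>"
    and "0 \<le> \<eta>"
    and "0 \<le> \<epsilon>" and "\<epsilon> \<le> 1"
  shows "\<mu> \<le> \<epsilon> * (2 + 2 * C + a * \<kappa> * (1 + 2 * \<tau>)) * \<mu> + \<tau> * \<eta>"
proof -
  have "\<mu> > 0"
    using \<open>q > 0\<close> \<open>q * q = \<mu>\<close> by (metis mult_pos_pos)
  have "W * d \<le> (2 * q) * (\<epsilon> * q)"
    using assms(2,3) \<open>q > 0\<close> \<open>0 \<le> d\<close> by (intro mult_mono) auto
  also have "\<dots> = 2 * \<epsilon> * \<mu>"
    unfolding \<open>q * q = \<mu>\<close>[symmetric] by (simp add: algebra_simps)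
  finally have Wd: "W * d \<le> 2 * \<epsilon> * \<mu>" .
  have "d\<^sup>2 \<le> (\<epsilon> * q)\<^sup>2"
    using assms(3) \<open>0 \<le> d\<close> by (simp add: power_mono)
  also have "\<dots> = \<epsilon> * (\<epsilon> * \<mu>)"
    using \<open>q * q = \<mu>\<close> by (simp add: power2_eq_square mult_ac)
  also have "\<dots> \<le> \<epsilon> * \<mu>"
    using \<open>0 \<le> \<epsilon>\<close> \<open>\<epsilon> \<le> 1\<close> \<open>\<mu> > 0\<close> by (simp add: mult_left_le_one_le)
  finally have dd: "d\<^sup>2 \<le> \<epsilon> * \<mu>" .
  have "(\<mu> + \<alpha>) * W * d \<le> (\<mu> + C * \<mu>) * (2 * \<epsilon> * \<mu>)"
    unfolding mult.assoc[of "\<mu> + \<alpha>"]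
    using \<open>\<alpha> \<le> C * \<mu>\<close> \<open>0 \<le> \<alpha>\<close> \<open>\<mu> > 0\<close> \<open>0 \<le> W\<close> \<open>0 \<le> d\<close> by (intro mult_mono[OF _ Wd]) auto
  moreover have "\<mu> * (a * \<kappa> * d\<^sup>2) \<le> \<mu> * (a * \<kappa> * (\<epsilon> * \<mu>))"
    using dd \<open>\<mu> > 0\<close> \<open>0 \<le> a\<close> \<open>0 \<le> \<kappa>\<close> by (intro mult_left_mono) auto
  moreover have "\<eta> * r \<le> \<eta> * (\<tau> * \<mu>)"
    using \<open>r \<le> \<tau> * \<mu>\<close> \<open>0 \<le> \<eta>\<close> by (rule mult_left_mono)
  moreover have "a * (\<kappa> * d) * W * r \<le> a * \<kappa> * (2 * \<epsilon> * \<mu>) * (\<tau> * \<mu>)"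
  proof -
    have "a * (\<kappa> * d) * W * r = a * \<kappa> * (W * d) * r"
      by (simp add: mult_ac)
    also have "\<dots> \<le> a * \<kappa> * (2 * \<epsilon> * \<mu>) * (\<tau> * \<mu>)"
      using \<open>r \<le> \<tau> * \<mu>\<close> \<open>0 \<le> r\<close> \<open>0 \<le> a\<close> \<open>0 \<le> \<kappa>\<close> \<open>0 \<le> \<epsilon>\<close> \<open>\<mu> > 0\<close>
      by (intro mult_mono[OF mult_left_mono[OF Wd]]) auto
    finally show ?thesis .
  qed
  ultimately have "\<mu> * \<mu> \<le> \<mu> * (\<epsilon> * (2 + 2 * C + a * \<kappa> * (1 + 2 * \<tau>)) * \<mu> + \<tau> * \<eta>)"
    using key by (simp add: power2_eq_square algebra_simps)
  then show ?thesis
    using \<open>\<mu> > 0\<close> by simp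
qed

section \<open>Operators with factorized derivative\<close>

locale factorized_derivative =
  fixes F :: "'a::{real_inner,complete_space} \<Rightarrow> 'b::{real_inner,complete_space}"
    and F' :: "'a \<Rightarrow> ('a \<Rightarrow>\<^sub>L 'b)" and xd :: 'a and \<rho> \<kappa> :: real
  assumes radius_pos: "\<rho> > 0" and kappa_nonneg: "\<kappa> \<ge> 0"
    and derivative: "\<And>z. z \<in> ball xd \<rho> \<Longrightarrow> (F has_derivative blinfun_apply (F' z)) (at z)"
    and factorization: "\<And>z. z \<in> ball xd \<rho> \<Longrightarrow>
      \<exists>R. F' z = F' xd o\<^sub>L R \<and> norm (id_blinfun - R) \<le> \<kappa> * norm (z - xd)"
begin

lemma norm_derivative_diff_le:
  assumes "z \<in> ball xd \<rho>"
  shows "norm (F' z - F' xd) \<le> norm (F' xd) * \<kappa> * norm (z - xd)"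
proof -
  obtain R where "F' z = F' xd o\<^sub>L R" and R: "norm (id_blinfun - R) \<le> \<kappa> * norm (z - xd)"
    using factorization[OF assms] by blast
  then have "F' z - F' xd = F' xd o\<^sub>L (R - id_blinfun)"
    by (auto intro!: blinfun_eqI simp: blinfun.diff_right minus_blinfun.rep_eq)
  then have "norm (F' z - F' xd) \<le> norm (F' xd) * norm (id_blinfun - R)"
    by (metis norm_blinfun_compose norm_minus_commute)
  also have "\<dots> \<le> norm (F' xd) * (\<kappa> * norm (z - xd))"
    using R by (simp add: mult_left_mono)
  finally show ?thesis by (simp add: mult.assoc)
qed

lemma linearization_error:
  assumes "x \<in> ball xd \<rho>"
  shows "norm (F x - F xd - F' xd (x - xd)) \<le> norm (F' xd) * \<kappa> * (norm (x - xd))\<^sup>2"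
proof -
  let ?S = "cball xd (norm (x - xd))"
  have S_ball: "?S \<subseteq> ball xd \<rho>"
    using assms by (auto simp: dist_norm norm_minus_commute)
  have "norm (F x - F xd - F' xd (x - xd)) \<le> norm (x - xd) * (norm (F' xd) * \<kappa> * norm (x - xd))"
  proof (rule differentiable_bound_linearization[where S = ?S and f' = "\<lambda>z. blinfun_apply (F' z)"])
    show "xd + t *\<^sub>R (x - xd) \<in> ?S" if "t \<in> {0..1}" for t
      using that by (auto simp: dist_norm mult_left_le_one_le)
    show "(F has_derivative blinfun_apply (F' z)) (at z within ?S)" if "z \<in> ?S" for z
      using S_ball that derivative has_derivative_at_withinI by blast
    show "onorm (blinfun_apply (F' z) - blinfun_apply (F' xd)) \<le> norm (F' xd) * \<kappa> * norm (x - xd)"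
      if "z \<in> ?S" for z
    proof -
      have "norm (F' z - F' xd) \<le> norm (F' xd) * \<kappa> * norm (z - xd)"
        using S_ball that norm_derivative_diff_le by blast
      also have "\<dots> \<le> norm (F' xd) * \<kappa> * norm (x - xd)"
        using that kappa_nonneg by (intro mult_left_mono) (auto simp: dist_norm norm_minus_commute)
      finally show ?thesis
        by (simp add: norm_blinfun.rep_eq minus_blinfun.rep_eq fun_diff_def)
    qed
  qed simp
  then show ?thesis
    by (simp add: power2_eq_square mult_ac)
qed

lemma tikhonov_stationary_factored:
  assumes "tikhonov_minimizer D F xs \<alpha> yd x" and "ball xd \<rho> \<subseteq> D" and "x \<in> ball xd \<rho>"
  obtains R where "\<And>h. norm (R h - h) \<le> \<kappa> * norm (x - xd) * norm h"
    and "\<And>h. F' xd (R h) \<bullet> (F x - yd) + \<alpha> * (h \<bullet> (x - xs)) = 0"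
proof -
  obtain R where "F' x = F' xd o\<^sub>L R" and R: "norm (id_blinfun - R) \<le> \<kappa> * norm (x - xd)"
    using factorization[OF assms(3)] by blast
  have "norm (R h - h) \<le> \<kappa> * norm (x - xd) * norm h" for h
  proof -
    have "norm (R h - h) = norm ((id_blinfun - R) h)"
      by (simp add: blinfun.diff_left norm_minus_commute)
    also have "\<dots> \<le> norm (id_blinfun - R) * norm h"
      by (rule norm_blinfun)
    finally show ?thesis
      using R by (meson mult_right_mono norm_ge_zero order_trans)
  qed
  moreover have "ball x (\<rho> - dist xd x) \<subseteq> D"
  proof
    fix z assume "z \<in> ball x (\<rho> - dist xd x)"
    then have "z \<in> ball xd \<rho>"
      using dist_triangle[of xd z x] by simp
    then show "z \<in> D" using assms(2) by blast
  qed
  then have "F' x h \<bullet> (F x - yd) + \<alpha> * (h \<bullet> (x - xs)) = 0" for h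
    using assms(3) by (intro tikhonov_minimizer_stationary[OF assms(1) _ _ derivative]) auto
  ultimately show ?thesis
    using that \<open>F' x = F' xd o\<^sub>L R\<close> by auto
qed

lemma tikhonov_parameter_bound:
  assumes "tikhonov_minimizer D F xs \<alpha> yd x" and "ball xd \<rho> \<subseteq> D" and "x \<in> ball xd \<rho>"
    and "\<alpha> > 0" and "xd \<noteq> xs"
    and "2 * norm (x - xd) \<le> norm (xd - xs)" and "\<kappa> * norm (x - xd) \<le> 1"
  shows "\<alpha> * norm (xd - xs) \<le> 4 * norm (F' xd) * norm (F x - yd)"
proof -
  obtain R where R: "\<And>h. norm (R h - h) \<le> \<kappa> * norm (x - xd) * norm h"
    and "\<And>h. F' xd (R h) \<bullet> (F x - yd) + \<alpha> * (h \<bullet> (x - xs)) = 0"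
    using tikhonov_stationary_factored[OF assms(1-3)] by blast
  then have stationary: "F' xd (R h) \<bullet> (F x - yd) + \<alpha> * (h \<bullet> ((x - xd) + (xd - xs))) = 0" for h
    by simp
  have "\<kappa> * norm (x - xd) * norm (xd - xs) \<le> norm (xd - xs)"
    using mult_right_mono[OF assms(7) norm_ge_zero[of "xd - xs"]] by simp
  then have "norm (R (xd - xs)) \<le> 2 * norm (xd - xs)"
    using R[of "xd - xs"] norm_triangle_sub[of "R (xd - xs)" "xd - xs"] by simp
  then show ?thesis
    using tested_stationarity_parameter_le[where R = R, OF stationary \<open>\<alpha> > 0\<close>] assms(5,6) by simp
qed

lemma tikhonov_adjoint_test:
  fixes v :: 'b
  defines "w \<equiv> adjoint (F' xd) v"
  assumes "tikhonov_minimizer D F xs \<alpha> yd x" and "ball xd \<rho> \<subseteq> D" and "x \<in> ball xd \<rho>"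
    and "\<alpha> \<ge> 0" and "F xd = y" and "yd = y + (s * \<mu>) *\<^sub>R v" and "\<bar>s\<bar> = 1"
    and "s * (w \<bullet> (xd - xs)) \<le> 0" and "norm v = 1" and "\<mu> \<ge> 0"
  shows "\<mu>\<^sup>2 \<le> (\<mu> + \<alpha>) * norm w * norm (x - xd) + \<mu> * (norm (F' xd) * \<kappa> * (norm (x - xd))\<^sup>2)
    + norm (F' xd w - \<mu> *\<^sub>R v) * norm (F x - yd)
    + norm (F' xd) * (\<kappa> * norm (x - xd)) * norm w * norm (F x - yd)"
proof -
  define rem where "rem = F x - F xd - F' xd (x - xd)"
  obtain R where R: "\<And>h. norm (R h - h) \<le> \<kappa> * norm (x - xd) * norm h"
    and "\<And>h. F' xd (R h) \<bullet> (F x - yd) + \<alpha> * (h \<bullet> (x - xs)) = 0"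
    using tikhonov_stationary_factored[OF assms(2-4)] by blast
  then have stationary: "F' xd (R h) \<bullet> (F x - yd) + \<alpha> * (h \<bullet> ((x - xd) + (xd - xs))) = 0" for h
    by simp
  have residual: "F x - yd = F' xd (x - xd) + rem - (s * \<mu>) *\<^sub>R v"
    using assms(6,7) by (simp add: rem_def)
  have "\<mu>\<^sup>2 \<le> (\<mu> + \<alpha>) * norm w * norm (x - xd) + \<mu> * norm rem
      + norm (F' xd w - \<mu> *\<^sub>R v) * norm (F x - yd)
      + norm (F' xd) * (\<kappa> * norm (x - xd)) * norm w * norm (F x - yd)"
    using adjoint_tested_stationarity_bound[where R = R and k = "\<kappa> * norm (x - xd)" and q = rem
        and \<mu> = \<mu>, OF stationary residual assms(10,8) assms(9)[unfolded w_def] assms(11,5) R]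
    by (simp add: w_def)
  moreover have "\<mu> * norm rem \<le> \<mu> * (norm (F' xd) * \<kappa> * (norm (x - xd))\<^sup>2)"
    using linearization_error[OF assms(4)] \<open>\<mu> \<ge> 0\<close> by (simp add: rem_def mult_left_mono)
  ultimately show ?thesis
    by linarith
qed

lemma tikhonov_estimate_at_approximate_eigenvector:
  fixes xs :: 'a and y v :: 'b and \<mu> :: real
  defines "E \<equiv> norm (xd - xs)" and "\<eta> \<equiv> norm (F' xd (adjoint (F' xd) v) - \<mu> *\<^sub>R v)"
  assumes "ball xd \<rho> \<subseteq> D" and "F xd = y" and "xd \<noteq> xs"
    and "tikhonov_minimizer D F xs \<alpha> yd x" and "\<alpha> > 0"
    and "yd = y + (s * \<mu>) *\<^sub>R v" and "\<bar>s\<bar> = 1" and "s * (adjoint (F' xd) v \<bullet> (xd - xs)) \<le> 0"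
    and "norm v = 1" and "\<eta> \<le> \<mu>"
    and residual: "norm (F x - yd) \<le> \<tau> * \<mu>" and close: "norm (x - xd) \<le> \<epsilon> * sqrt \<mu>"
    and "\<mu> > 0" and "\<tau> \<ge> 0" and "0 \<le> \<epsilon>" and "\<epsilon> \<le> 1"
    and "sqrt \<mu> < \<rho>" and "2 * sqrt \<mu> \<le> E" and "\<kappa> * sqrt \<mu> \<le> 1"
  shows "\<mu> \<le> \<epsilon> * (2 + 8 * norm (F' xd) * \<tau> / E + norm (F' xd) * \<kappa> * (1 + 2 * \<tau>)) * \<mu> + \<tau> * \<eta>"
proof -
  define q where "q = sqrt \<mu>"
  have "q > 0" and "q * q = \<mu>"
    using \<open>\<mu> > 0\<close> by (auto simp: q_def)
  have "\<epsilon> * q \<le> q"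
    using \<open>\<epsilon> \<le> 1\<close> \<open>q > 0\<close> by (simp add: mult_left_le_one_le)
  then have "norm (x - xd) \<le> q"
    using close by (simp add: q_def)
  then have "x \<in> ball xd \<rho>" and "\<kappa> * norm (x - xd) \<le> 1"
    using \<open>sqrt \<mu> < \<rho>\<close> \<open>\<kappa> * sqrt \<mu> \<le> 1\<close> kappa_nonneg mult_left_mono[of "norm (x - xd)" q \<kappa>]
    by (auto simp: q_def dist_norm norm_minus_commute)
  have "\<alpha> * E \<le> 4 * norm (F' xd) * (\<tau> * \<mu>)"
    using tikhonov_parameter_bound[OF assms(6,3) \<open>x \<in> ball xd \<rho>\<close> \<open>\<alpha> > 0\<close> \<open>xd \<noteq> xs\<close>]
      \<open>norm (x - xd) \<le> q\<close> \<open>2 * sqrt \<mu> \<le> E\<close> \<open>\<kappa> * norm (x - xd) \<le> 1\<close> residual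
      mult_left_mono[of _ _ "4 * norm (F' xd)"]
    by (fastforce simp: q_def E_def)
  then have \<alpha>_le: "\<alpha> \<le> (4 * norm (F' xd) * \<tau> / E) * \<mu>"
    using \<open>xd \<noteq> xs\<close> by (simp add: E_def field_simps)
  have "(norm (adjoint (F' xd) v))\<^sup>2 \<le> (2 * q)\<^sup>2"
    using norm_adjoint_approximate_eigenvector[OF \<open>norm v = 1\<close>, of "F' xd" \<mu>] \<open>\<eta> \<le> \<mu>\<close> \<open>\<mu> > 0\<close>
      \<open>q * q = \<mu>\<close>
    by (simp add: \<eta>_def power2_eq_square)
  then have w_le: "norm (adjoint (F' xd) v) \<le> 2 * q"
    by (rule power2_le_imp_le) (use \<open>q > 0\<close> in simp)
  have key: "\<mu>\<^sup>2 \<le> (\<mu> + \<alpha>) * norm (adjoint (F' xd) v) * norm (x - xd)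
      + \<mu> * (norm (F' xd) * \<kappa> * (norm (x - xd))\<^sup>2) + \<eta> * norm (F x - yd)
      + norm (F' xd) * (\<kappa> * norm (x - xd)) * norm (adjoint (F' xd) v) * norm (F x - yd)"
    using tikhonov_adjoint_test[OF assms(6,3) \<open>x \<in> ball xd \<rho>\<close> _ assms(4,8-11)] \<open>\<alpha> > 0\<close> \<open>\<mu> > 0\<close>
    by (simp add: \<eta>_def)
  have "\<mu> \<le> \<epsilon> * (2 + 2 * (4 * norm (F' xd) * \<tau> / E) + norm (F' xd) * \<kappa> * (1 + 2 * \<tau>)) * \<mu>
      + \<tau> * \<eta>"
    using \<open>\<alpha> > 0\<close> close
    by (intro rate_estimate_of_tested_bound[OF key w_le _ \<open>q * q = \<mu>\<close> \<alpha>_le residual \<open>q > 0\<close>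
          norm_ge_zero norm_ge_zero norm_ge_zero _ norm_ge_zero kappa_nonneg _ \<open>0 \<le> \<epsilon>\<close> \<open>\<epsilon> \<le> 1\<close>])
      (auto simp: q_def \<eta>_def)
  then show ?thesis
    by (simp add: mult.assoc)
qed

lemma tikhonov_estimate_at_spectral_value:
  fixes xs :: 'a and y :: 'b and alpha :: "'b \<Rightarrow> real" and xr :: "'b \<Rightarrow> 'a"
  assumes "ball xd \<rho> \<subseteq> D" and "F xd = y" and "xd \<noteq> xs"
    and "\<mu> > 0" and "\<mu> \<in> op_spectrum (blinfun_apply (F' xd) \<circ> adjoint (blinfun_apply (F' xd)))"
    and data: "\<And>yd. norm (yd - y) \<le> \<mu> \<Longrightarrow>
      alpha yd > 0 \<and> tikhonov_minimizer D F xs (alpha yd) yd (xr yd)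
      \<and> norm (F (xr yd) - yd) \<le> \<tau> * \<mu> \<and> norm (xr yd - xd) \<le> \<epsilon> * sqrt \<mu>"
    and "\<tau> \<ge> 0" and "\<epsilon> \<le> 1" and "sqrt \<mu> < \<rho>" and "2 * sqrt \<mu> \<le> norm (xd - xs)" and "\<kappa> * sqrt \<mu> \<le> 1"
    and "0 < c" and "c \<le> \<mu>"
  shows "\<mu> \<le> \<epsilon> * (2 + 8 * norm (F' xd) * \<tau> / norm (xd - xs) + norm (F' xd) * \<kappa> * (1 + 2 * \<tau>)) * \<mu>
    + \<tau> * c" (is "_ \<le> ?M * \<mu> + _")
proof -
  let ?A = "blinfun_apply (F' xd)"
  have "norm (xr y - xd) \<le> \<epsilon> * sqrt \<mu>"
    using data[of y] \<open>\<mu> > 0\<close> by simp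
  then have "0 \<le> \<epsilon> * sqrt \<mu>"
    by (rule order_trans[OF norm_ge_zero])
  then have "0 \<le> \<epsilon>"
    using \<open>\<mu> > 0\<close> by (simp add: zero_le_mult_iff)
  obtain v where "norm v = 1" and "norm ((?A \<circ> adjoint ?A) v - \<mu> *\<^sub>R v) < c"
    using op_spectrum_approximate_eigenvector[OF compose_adjoint_selfadjoint[OF blinfun.bounded_linear_right]
        \<open>\<mu> \<in> op_spectrum _\<close> \<open>0 < c\<close>] by blast
  then have v: "norm (?A (adjoint ?A v) - \<mu> *\<^sub>R v) < c"
    by simp
  \<comment> \<open>With this sign, the term of the tested first-order condition that involves xd - xs
    is nonpositive after multiplication by s and can be dropped.\<close>
  define s :: real where "s = (if adjoint ?A v \<bullet> (xd - xs) \<le> 0 then 1 else -1)"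
  define yd where "yd = y + (s * \<mu>) *\<^sub>R v"
  have "\<bar>s\<bar> = 1" and "s * (adjoint ?A v \<bullet> (xd - xs)) \<le> 0"
    by (auto simp: s_def)
  have "norm (yd - y) = \<mu>"
    using \<open>norm v = 1\<close> \<open>\<mu> > 0\<close> \<open>\<bar>s\<bar> = 1\<close> by (simp add: yd_def abs_mult)
  then have "alpha yd > 0" and "tikhonov_minimizer D F xs (alpha yd) yd (xr yd)"
    and "norm (F (xr yd) - yd) \<le> \<tau> * \<mu>" and "norm (xr yd - xd) \<le> \<epsilon> * sqrt \<mu>"
    using data by auto
  moreover have "norm (?A (adjoint ?A v) - \<mu> *\<^sub>R v) \<le> \<mu>"
    using v \<open>c \<le> \<mu>\<close> by simp
  ultimately have "\<mu> \<le> ?M * \<mu> + \<tau> * norm (?A (adjoint ?A v) - \<mu> *\<^sub>R v)"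
    using tikhonov_estimate_at_approximate_eigenvector[OF assms(1-3) _ _ yd_def \<open>\<bar>s\<bar> = 1\<close>
        \<open>s * _ \<le> 0\<close> \<open>norm v = 1\<close> _ _ _ \<open>\<mu> > 0\<close> \<open>\<tau> \<ge> 0\<close> \<open>0 \<le> \<epsilon>\<close> assms(8-11)]
    by blast
  also have "\<dots> \<le> ?M * \<mu> + \<tau> * c"
    using v \<open>\<tau> \<ge> 0\<close> by (simp add: mult_left_mono)
  finally show ?thesis .
qed

lemma tikhonov_rate_constant_lower_bound:
  fixes xs :: 'a and y :: 'b and lam :: "nat \<Rightarrow> real"
    and alpha :: "real \<Rightarrow> 'b \<Rightarrow> real" and xr :: "real \<Rightarrow> 'b \<Rightarrow> 'a"
  assumes "ball xd \<rho> \<subseteq> D" and "F xd = y" and "xd \<noteq> xs"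
    and spectrum: "\<And>k. lam k > 0
      \<and> lam k \<in> op_spectrum (blinfun_apply (F' xd) \<circ> adjoint (blinfun_apply (F' xd)))"
    and "lam \<longlonglongrightarrow> 0" and "\<tau> \<ge> 0" and "\<epsilon> \<le> 1" and "\<delta>\<^sub>0 > 0"
    and data: "\<And>\<delta> yd. 0 < \<delta> \<Longrightarrow> \<delta> < \<delta>\<^sub>0 \<Longrightarrow> norm (yd - y) \<le> \<delta> \<Longrightarrow>
      alpha \<delta> yd > 0 \<and> tikhonov_minimizer D F xs (alpha \<delta> yd) yd (xr \<delta> yd)
      \<and> norm (F (xr \<delta> yd) - yd) \<le> \<tau> * \<delta> \<and> norm (xr \<delta> yd - xd) \<le> \<epsilon> * sqrt \<delta>"
  shows "1 \<le> \<epsilon> * (2 + 8 * norm (F' xd) * \<tau> / norm (xd - xs) + norm (F' xd) * \<kappa> * (1 + 2 * \<tau>))"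
    (is "1 \<le> ?M")
proof -
  have "\<forall>\<^sub>F k in sequentially. lam k < \<delta>\<^sub>0"
    using order_tendstoD(2)[OF \<open>lam \<longlonglongrightarrow> 0\<close> \<open>\<delta>\<^sub>0 > 0\<close>] .
  moreover have
    "\<forall>\<^sub>F k in sequentially. sqrt (lam k) < min \<rho> (min (norm (xd - xs) / 2) (1 / (\<kappa> + 1)))"
    using order_tendstoD(2)[OF tendsto_real_sqrt[OF \<open>lam \<longlonglongrightarrow> 0\<close>],
        of "min \<rho> (min (norm (xd - xs) / 2) (1 / (\<kappa> + 1)))"] \<open>xd \<noteq> xs\<close> radius_pos kappa_nonneg
    by (simp only: real_sqrt_zero) simp
  ultimately obtain k where "lam k < \<delta>\<^sub>0"
    and small: "sqrt (lam k) < min \<rho> (min (norm (xd - xs) / 2) (1 / (\<kappa> + 1)))"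
    using eventually_happens'[OF sequentially_bot eventually_conj] by blast
  have "\<kappa> * sqrt (lam k) \<le> sqrt (lam k) * (\<kappa> + 1)"
    using spectrum[of k] by (simp add: algebra_simps less_imp_le)
  moreover have "sqrt (lam k) * (\<kappa> + 1) < 1"
    using small kappa_nonneg by (simp add: field_simps)
  ultimately have "\<kappa> * sqrt (lam k) \<le> 1"
    by linarith
  then have approx: "lam k \<le> ?M * lam k + \<tau> * c" if "0 < c" and "c \<le> lam k" for c
    using spectrum[of k] data[of "lam k"] small \<open>lam k < \<delta>\<^sub>0\<close> that
    by (intro tikhonov_estimate_at_spectral_value[OF assms(1-3), where alpha = "alpha (lam k)"
          and xr = "xr (lam k)"]) (auto simp: assms(6,7))
  have "lam k \<le> ?M * lam k + 0"
  proof (rule field_le_epsilon)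
    fix e :: real assume "e > 0"
    define c where "c = min (lam k) (e / (\<tau> + 1))"
    have "\<tau> * c \<le> \<tau> * (e / (\<tau> + 1))"
      using \<open>\<tau> \<ge> 0\<close> by (intro mult_left_mono) (auto simp: c_def)
    also have "\<dots> \<le> e"
      using \<open>\<tau> \<ge> 0\<close> \<open>e > 0\<close> by (simp add: field_simps)
    finally show "lam k \<le> ?M * lam k + 0 + e"
      using approx[of c] spectrum[of k] \<open>e > 0\<close> \<open>\<tau> \<ge> 0\<close> by (simp add: c_def)
  qed
  then have "1 * lam k \<le> ?M * lam k"
    by simp
  then show ?thesis
    using spectrum[of k] by (meson mult_right_le_imp_le)
qed

end

lemma assumption1_imp_factorized_derivative:
  assumes "assumption1 D F F' xd"
  obtains \<rho> \<kappa> where "ball xd \<rho> \<subseteq> D" and "factorized_derivative F F' xd \<rho> \<kappa>"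
proof -
  obtain \<rho> \<kappa> where "\<rho> > 0" and "ball xd \<rho> \<subseteq> D" and "\<kappa> \<ge> 0"
    and derivative: "\<forall>x\<in>ball xd \<rho>. (F has_derivative blinfun_apply (F' x)) (at x)"
    and factorization: "\<forall>x\<in>ball xd \<rho>. \<forall>z\<in>ball xd \<rho>.
      \<exists>R. F' x = F' z o\<^sub>L R \<and> norm (id_blinfun - R) \<le> \<kappa> * norm (x - z)"
    using assms unfolding assumption1_def by blast
  have "xd \<in> ball xd \<rho>"
    using \<open>\<rho> > 0\<close> by simp
  then have "factorized_derivative F F' xd \<rho> \<kappa>"
    using \<open>\<rho> > 0\<close> \<open>\<kappa> \<ge> 0\<close> derivative factorization by unfold_locales blast+
  with \<open>ball xd \<rho> \<subseteq> D\<close> show ?thesis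
    using that by blast
qed

theorem theorem2p2:
  fixes D :: "'a::{real_inner, complete_space} set"
    and F :: "'a \<Rightarrow> 'b::{real_inner, complete_space}"
    and F' :: "'a \<Rightarrow> ('a \<Rightarrow>\<^sub>L 'b)"
    and y :: 'b and xs xd :: 'a
    and lam :: "nat \<Rightarrow> real" and \<tau> :: real
    and alpha :: "real \<Rightarrow> 'b \<Rightarrow> real" and xr :: "real \<Rightarrow> 'b \<Rightarrow> 'a"
  assumes "y \<in> F ` D" and "xs \<in> D"
    and "min_norm_solution D F y xs xd"
    and "assumption1 D F F' xd"
    and "\<forall>k. lam k > 0 \<and> lam k \<in> op_spectrum (blinfun_apply (F' xd) \<circ> adjoint (blinfun_apply (F' xd)))"
    and "lam \<longlonglongrightarrow> 0"
    and "\<tau> > 0"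
    and "\<exists>\<delta>0>0. \<forall>\<delta> yd. 0 < \<delta> \<and> \<delta> < \<delta>0 \<and> norm (yd - y) \<le> \<delta> \<longrightarrow>
            alpha \<delta> yd > 0 \<and> tikhonov_minimizer D F xs (alpha \<delta> yd) yd (xr \<delta> yd)
            \<and> norm (F (xr \<delta> yd) - yd) \<le> \<tau> * \<delta>"
    and "\<forall>\<epsilon>>0. \<exists>\<delta>1>0. \<forall>\<delta> yd. 0 < \<delta> \<and> \<delta> < \<delta>1 \<and> norm (yd - y) \<le> \<delta> \<longrightarrow>
            norm (xr \<delta> yd - xd) \<le> \<epsilon> * sqrt \<delta>"
  shows "xd = xs"
proof (rule ccontr)
  assume "xd \<noteq> xs"
  obtain \<rho> \<kappa> where "ball xd \<rho> \<subseteq> D" and fd: "factorized_derivative F F' xd \<rho> \<kappa>"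
    using assumption1_imp_factorized_derivative[OF assms(4)] .
  have "F xd = y"
    using assms(3) by (simp add: min_norm_solution_def)
  define M where "M = 2 + 8 * norm (F' xd) * \<tau> / norm (xd - xs) + norm (F' xd) * \<kappa> * (1 + 2 * \<tau>)"
  have "M \<ge> 0"
    using \<open>\<tau> > 0\<close> factorized_derivative.kappa_nonneg[OF fd] by (simp add: M_def)
  define \<epsilon> where "\<epsilon> = 1 / (M + 1)"
  have "\<epsilon> > 0" and "\<epsilon> \<le> 1" and "\<epsilon> * M < 1"
    using \<open>M \<ge> 0\<close> by (auto simp: \<epsilon>_def field_simps)
  obtain \<delta>0 \<delta>1 where "\<delta>0 > 0" and "\<delta>1 > 0"
    and data: "\<And>\<delta> yd. 0 < \<delta> \<Longrightarrow> \<delta> < min \<delta>0 \<delta>1 \<Longrightarrow> norm (yd - y) \<le> \<delta> \<Longrightarrow>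
      alpha \<delta> yd > 0 \<and> tikhonov_minimizer D F xs (alpha \<delta> yd) yd (xr \<delta> yd)
      \<and> norm (F (xr \<delta> yd) - yd) \<le> \<tau> * \<delta> \<and> norm (xr \<delta> yd - xd) \<le> \<epsilon> * sqrt \<delta>"
    using assms(8) assms(9)[rule_format, OF \<open>\<epsilon> > 0\<close>] by (metis min_less_iff_conj)
  have "1 \<le> \<epsilon> * M"
    unfolding M_def
    using \<open>\<tau> > 0\<close> \<open>\<delta>0 > 0\<close> \<open>\<delta>1 > 0\<close>
    by (intro factorized_derivative.tikhonov_rate_constant_lower_bound[OF fd \<open>ball xd \<rho> \<subseteq> D\<close>
          \<open>F xd = y\<close> \<open>xd \<noteq> xs\<close> assms(5)[rule_format] assms(6) _ \<open>\<epsilon> \<le> 1\<close>,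
          where \<delta>\<^sub>0 = "min \<delta>0 \<delta>1", OF _ _ data])
      auto
  with \<open>\<epsilon> * M < 1\<close> show False
    by simp
qed

end
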